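(* Let $n\ge 4$ be an even integer and $k\ge 3$ an integer. Then $\psi(C_n\square P_k)=4$.
   Context: All graphs are finite and connected; $d(u,v)$ is the shortest-path distance. $C_n$ is the cycle on $n$ vertices and $P_k$ the path on $k$ vertices. The cartesian product $G\square H$ has vertex set $V(G)\times V(H)$, with $(g_1,h_1)$ adjacent to $(g_2,h_2)$ iff either $h_1=h_2$ and $g_1g_2\in E(G)$, or $g_1=g_2$ and $h_1h_2\in E(H)$. For an ordered set $Q=\{q_1,\dots,q_l\}$ of vertices, $r(x|Q)=(d(x,q_1),\dots,d(x,q_l))$. $Q$ is a doubly resolving set of $G$ if for any two distinct vertices $x,y$ of $G$, $r(x|Q)-r(y|Q)\neq\lambda(1,\dots,1)$ for every integer $\lambda$. $\psi(G)$ denotes the minimum size of a doubly resolving set of $G$. *)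

theory Defs
  imports Main
begin

definition gdist :: "'a set \<Rightarrow> ('a \<Rightarrow> 'a \<Rightarrow> bool) \<Rightarrow> 'a \<Rightarrow> 'a \<Rightarrow> nat" where
  "gdist V E u v = (LEAST m. \<exists>p. length p = Suc m \<and> hd p = u \<and> last p = v \<and>
       set p \<subseteq> V \<and> (\<forall>i<m. E (p ! i) (p ! Suc i)))"

definition cycle_adj :: "nat \<Rightarrow> nat \<Rightarrow> nat \<Rightarrow> bool" where
  "cycle_adj n i j = (i < n \<and> j < n \<and> (j = (i + 1) mod n \<or> i = (j + 1) mod n))"

definition path_adj :: "nat \<Rightarrow> nat \<Rightarrow> nat \<Rightarrow> bool" where
  "path_adj k i j = (i < k \<and> j < k \<and> (j = i + 1 \<or> i = j + 1))"

definition cart_adj :: "('a \<Rightarrow> 'a \<Rightarrow> bool) \<Rightarrow> ('b \<Rightarrow> 'b \<Rightarrow> bool) \<Rightarrow> 'a \<times> 'b \<Rightarrow> 'a \<times> 'b \<Rightarrow> bool" where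
  "cart_adj EG EH x y = ((snd x = snd y \<and> EG (fst x) (fst y)) \<or> (fst x = fst y \<and> EH (snd x) (snd y)))"

definition doubly_resolving :: "'a set \<Rightarrow> ('a \<Rightarrow> 'a \<Rightarrow> bool) \<Rightarrow> 'a set \<Rightarrow> bool" where
  "doubly_resolving V E Q = (Q \<subseteq> V \<and> finite Q \<and>
     (\<forall>x\<in>V. \<forall>y\<in>V. x \<noteq> y \<longrightarrow>
        \<not> (\<exists>c::int. \<forall>q\<in>Q. int (gdist V E x q) - int (gdist V E y q) = c)))"

definition psi :: "'a set \<Rightarrow> ('a \<Rightarrow> 'a \<Rightarrow> bool) \<Rightarrow> nat" where
  "psi V E = (LEAST m. \<exists>Q. doubly_resolving V E Q \<and> card Q = m)"

end

theory Submission
  imports Defs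
begin

(* Distances in C_n \<box> P_k add up: d((i,a),(j,b)) = d_C(i,j) + |a - b|.
   For n = 2m the landmarks (0,0), (0,k-1), (1,0), (m,0) doubly resolve: the two landmarks of
   column 0 force equal layers, the identity d_C(i,0) + d_C(i,m) = m turns the antipodal pair
   0, m into equal distances to column 0, and column 1 then separates the remaining candidates.
   Conversely, a doubly resolving set must meet both end layers, since otherwise two vertices
   stacked in adjacent layers have all distance differences equal to 1; and three landmarks
   (c1,0), (c2,k-1), (c3,b) never suffice: a reflection of the cycle moves c1 to 0 and c2 into
   0..m, after which an explicit pair of vertices with constant distance differences exists. *)

definition joins :: "'a set \<Rightarrow> ('a \<Rightarrow> 'a \<Rightarrow> bool) \<Rightarrow> 'a \<Rightarrow> 'a \<Rightarrow> nat \<Rightarrow> bool" where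
  "joins V E u v m \<longleftrightarrow> (\<exists>p. length p = Suc m \<and> hd p = u \<and> last p = v \<and>
       set p \<subseteq> V \<and> (\<forall>i<m. E (p ! i) (p ! Suc i)))"

lemma gdist_eq_Least_joins: "gdist V E u v = (LEAST m. joins V E u v m)"
  unfolding gdist_def joins_def ..

lemma joins_0: "joins V E u v 0 \<longleftrightarrow> u = v \<and> u \<in> V"
proof
  assume "joins V E u v 0"
  then obtain p where "length p = 1" "hd p = u" "last p = v" "set p \<subseteq> V"
    unfolding joins_def by auto
  then show "u = v \<and> u \<in> V" by (cases p) auto
next
  assume "u = v \<and> u \<in> V"
  then show "joins V E u v 0" unfolding joins_def by (intro exI[of _ "[u]"]) auto
qed

lemma joins_Cons:
  assumes "u \<in> V" "E u w" "joins V E w v m"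
  shows "joins V E u v (Suc m)"
proof -
  obtain p where p: "length p = Suc m" "hd p = w" "last p = v" "set p \<subseteq> V"
    "\<forall>i<m. E (p ! i) (p ! Suc i)"
    using assms(3) unfolding joins_def by blast
  have "p ! 0 = w" using p(1,2) by (cases p) auto
  then have "\<forall>i<Suc m. E ((u # p) ! i) ((u # p) ! Suc i)"
    using p(5) assms(2) by (auto simp: less_Suc_eq_0_disj)
  then show ?thesis
    unfolding joins_def using p assms(1) by (intro exI[of _ "u # p"]) auto
qed

lemma joins_SucD:
  assumes "joins V E u v (Suc m)"
  obtains w where "u \<in> V" "E u w" "joins V E w v m"
proof -
  obtain p where p: "length p = Suc (Suc m)" "hd p = u" "last p = v" "set p \<subseteq> V"
    "\<forall>i<Suc m. E (p ! i) (p ! Suc i)"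
    using assms unfolding joins_def by blast
  then obtain p' where pp: "p = u # p'" "p' \<noteq> []"
    by (cases p) fastforce+
  have "joins V E (hd p') v m"
    unfolding joins_def using p pp by (intro exI[of _ p']) auto
  moreover have "E u (hd p')"
    using p(5) pp by (auto simp: hd_conv_nth)
  ultimately show ?thesis
    using that p(4) pp by auto
qed

lemma gdist_eqI:
  fixes f :: "'a \<Rightarrow> nat"
  assumes "v \<in> V" "u \<in> V" "f v = 0"
    and descent: "\<And>x. x \<in> V \<Longrightarrow> x \<noteq> v \<Longrightarrow> \<exists>y\<in>V. E x y \<and> f x = Suc (f y)"
    and lipschitz: "\<And>x y. x \<in> V \<Longrightarrow> y \<in> V \<Longrightarrow> E x y \<Longrightarrow> f x \<le> Suc (f y)"
  shows "gdist V E u v = f u"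
proof -
  have joins_f: "joins V E x v (f x)" if "x \<in> V" for x
    using that
  proof (induction "f x" arbitrary: x)
    case 0
    then have "x = v" using descent by fastforce
    then show ?case using \<open>v \<in> V\<close> \<open>0 = f x\<close> by (simp add: joins_0)
  next
    case (Suc m)
    then have "x \<noteq> v" using \<open>f v = 0\<close> by auto
    then obtain y where "y \<in> V" "E x y" "f x = Suc (f y)" using descent Suc.prems by blast
    then show ?case using Suc joins_Cons by (metis nat.inject)
  qed
  have f_le: "f x \<le> m" if "joins V E x v m" for x m
    using that
  proof (induction m arbitrary: x)
    case 0
    then show ?case using \<open>f v = 0\<close> by (simp add: joins_0)
  next
    case (Suc m)
    then obtain w where "x \<in> V" "E x w" "joins V E w v m" by (auto elim: joins_SucD)
    moreover from this have "w \<in> V" by (cases m) (auto simp: joins_0 elim: joins_SucD)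
    ultimately show ?case using Suc.IH lipschitz by fastforce
  qed
  show ?thesis
    unfolding gdist_eq_Least_joins using joins_f[OF \<open>u \<in> V\<close>] f_le
    by (intro Least_equality) auto
qed

definition path_dist :: "nat \<Rightarrow> nat \<Rightarrow> nat" where
  "path_dist a b = nat \<bar>int a - int b\<bar>"

definition cycle_dist :: "nat \<Rightarrow> nat \<Rightarrow> nat \<Rightarrow> nat" where
  "cycle_dist n i j = min (path_dist i j) (n - path_dist i j)"

lemma path_dist_eq: "a \<le> b \<Longrightarrow> path_dist a b = b - a" "b \<le> a \<Longrightarrow> path_dist a b = a - b"
  unfolding path_dist_def by auto

lemma of_nat_cycle_dist:
  "i < n \<Longrightarrow> j < n \<Longrightarrow> int (cycle_dist n i j) = min \<bar>int i - int j\<bar> (int n - \<bar>int i - int j\<bar>)"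
  unfolding cycle_dist_def by (cases "i \<le> j"; simp add: path_dist_eq of_nat_diff min_def; arith)

lemma cycle_adj_iff:
  "cycle_adj n i j \<longleftrightarrow>
     i < n \<and> j < n \<and> (j = i + 1 \<or> i = j + 1 \<or> (i = n - 1 \<and> j = 0) \<or> (j = n - 1 \<and> i = 0))"
proof -
  have "j = (i + 1) mod n \<longleftrightarrow> j = i + 1 \<or> (i = n - 1 \<and> j = 0)" if "i < n" "j < n" for i j
  proof (cases "i + 1 = n")
    case False
    with that have "i + 1 < n" by simp
    then show ?thesis by auto
  qed (use that in auto)
  from this[of i j] this[of j i] show ?thesis unfolding cycle_adj_def
    by (cases "i < n \<and> j < n") auto
qed

lemma cycle_dist_adj_le:
  assumes "cycle_adj n i i'" "j < n"
  shows "cycle_dist n i j \<le> Suc (cycle_dist n i' j)"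
proof -
  have "i < n" "i' < n" using assms(1) by (auto simp: cycle_adj_iff)
  with assms have "int (cycle_dist n i j) \<le> int (cycle_dist n i' j) + 1"
    unfolding cycle_adj_iff of_nat_cycle_dist[OF \<open>i < n\<close> \<open>j < n\<close>]
      of_nat_cycle_dist[OF \<open>i' < n\<close> \<open>j < n\<close>]
    by (elim conjE disjE; arith)
  then show ?thesis by simp
qed

lemma cycle_dist_forward: "i \<le> j \<Longrightarrow> 2 * j \<le> n + 2 * i \<Longrightarrow> cycle_dist n i j = j - i"
  unfolding cycle_dist_def by (simp add: path_dist_eq)

lemma cycle_dist_backward: "j \<le> i \<Longrightarrow> 2 * i \<le> n + 2 * j \<Longrightarrow> cycle_dist n i j = i - j"
  unfolding cycle_dist_def by (simp add: path_dist_eq)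

lemma cycle_dist_forward_wrap: "i \<le> j \<Longrightarrow> n + 2 * i \<le> 2 * j \<Longrightarrow> cycle_dist n i j = n + i - j"
  unfolding cycle_dist_def by (simp add: path_dist_eq)

lemma cycle_dist_backward_wrap: "j \<le> i \<Longrightarrow> n + 2 * j \<le> 2 * i \<Longrightarrow> cycle_dist n i j = n + j - i"
  unfolding cycle_dist_def by (simp add: path_dist_eq)

lemmas cycle_dist_simps =
  cycle_dist_forward cycle_dist_backward cycle_dist_forward_wrap cycle_dist_backward_wrap

lemma cycle_dist_descent:
  assumes "i < n" "j < n" "i \<noteq> j" "n \<ge> 3"
  shows "\<exists>i'. cycle_adj n i i' \<and> cycle_dist n i j = Suc (cycle_dist n i' j)"
proof -
  consider "i < j" "2 * j \<le> n + 2 * i" | "i < j" "n + 2 * i < 2 * j"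
    | "j < i" "2 * i \<le> n + 2 * j" | "j < i" "n + 2 * j < 2 * i"
    using assms(3) by linarith
  then show ?thesis
  proof cases
    case 1
    then show ?thesis using assms
      by (intro exI[of _ "i + 1"]) (simp add: cycle_adj_iff cycle_dist_simps)
  next
    case 2
    then show ?thesis using assms
      by (intro exI[of _ "if i = 0 then n - 1 else i - 1"])
        (auto simp: cycle_adj_iff cycle_dist_simps)
  next
    case 3
    then show ?thesis using assms
      by (intro exI[of _ "i - 1"]) (auto simp: cycle_adj_iff cycle_dist_simps)
  next
    case 4
    then show ?thesis using assms
      by (intro exI[of _ "if i + 1 < n then i + 1 else 0"])
        (auto simp: cycle_adj_iff cycle_dist_simps)
  qed
qed

definition prism_dist :: "nat \<Rightarrow> nat \<times> nat \<Rightarrow> nat \<times> nat \<Rightarrow> nat" where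
  "prism_dist n x y = cycle_dist n (fst x) (fst y) + path_dist (snd x) (snd y)"

lemmas prism_dist_simps = prism_dist_def cycle_dist_simps path_dist_eq

lemma prism_dist_adj_le:
  assumes "cart_adj (cycle_adj n) (path_adj k) x y" "fst v < n"
  shows "prism_dist n x v \<le> Suc (prism_dist n y v)"
  using assms cycle_dist_adj_le[of n "fst x" "fst y" "fst v"]
  unfolding cart_adj_def path_adj_def prism_dist_def by (auto simp: path_dist_def)

lemma prism_dist_descent:
  assumes "n \<ge> 3" "x \<in> {0..<n} \<times> {0..<k}" "v \<in> {0..<n} \<times> {0..<k}" "x \<noteq> v"
  shows "\<exists>y\<in>{0..<n} \<times> {0..<k}.
           cart_adj (cycle_adj n) (path_adj k) x y \<and> prism_dist n x v = Suc (prism_dist n y v)"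
proof -
  obtain i a j b where x: "x = (i, a)" and v: "v = (j, b)" by fastforce
  consider "a = b" "i \<noteq> j" | "a < b" | "b < a" using assms(4) x v by fastforce
  then show ?thesis
  proof cases
    case 1
    moreover have "i < n" "j < n" using assms(2,3) x v by auto
    ultimately obtain i' where "cycle_adj n i i'" "cycle_dist n i j = Suc (cycle_dist n i' j)"
      using cycle_dist_descent assms(1) by blast
    then show ?thesis using 1 assms(2) x v
      by (intro bexI[of _ "(i', a)"]) (auto simp: cart_adj_def prism_dist_def cycle_adj_iff)
  next
    case 2
    then show ?thesis using assms(2,3) x v
      by (intro bexI[of _ "(i, a + 1)"])
        (auto simp: cart_adj_def prism_dist_def path_adj_def path_dist_eq)
  next
    case 3
    then show ?thesis using assms(2) x v
      by (intro bexI[of _ "(i, a - 1)"])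
        (auto simp: cart_adj_def prism_dist_def path_adj_def path_dist_eq)
  qed
qed

lemma gdist_prism:
  assumes "n \<ge> 3" "u \<in> {0..<n} \<times> {0..<k}" "v \<in> {0..<n} \<times> {0..<k}"
  shows "gdist ({0..<n} \<times> {0..<k}) (cart_adj (cycle_adj n) (path_adj k)) u v = prism_dist n u v"
  using assms prism_dist_descent[OF assms(1)] prism_dist_adj_le
  by (intro gdist_eqI) (auto simp: prism_dist_def cycle_dist_def path_dist_def)

definition doubly_resolves :: "('a \<Rightarrow> 'a \<Rightarrow> nat) \<Rightarrow> 'a set \<Rightarrow> 'a \<Rightarrow> 'a \<Rightarrow> bool" where
  "doubly_resolves d Q x y \<longleftrightarrow> \<not> (\<exists>c::int. \<forall>q\<in>Q. int (d x q) - int (d y q) = c)"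

definition doubly_resolving_on :: "('a \<Rightarrow> 'a \<Rightarrow> nat) \<Rightarrow> 'a set \<Rightarrow> 'a set \<Rightarrow> bool" where
  "doubly_resolving_on d V Q \<longleftrightarrow> (\<forall>x\<in>V. \<forall>y\<in>V. x \<noteq> y \<longrightarrow> doubly_resolves d Q x y)"

lemma doubly_resolving_iff:
  "doubly_resolving V E Q \<longleftrightarrow> Q \<subseteq> V \<and> finite Q \<and> doubly_resolving_on (gdist V E) V Q"
  unfolding doubly_resolving_def doubly_resolving_on_def doubly_resolves_def ..

lemma doubly_resolves_cong:
  assumes "\<And>q. q \<in> Q \<Longrightarrow> d x q = d' x q \<and> d y q = d' y q"
  shows "doubly_resolves d Q x y \<longleftrightarrow> doubly_resolves d' Q x y"
  unfolding doubly_resolves_def using assms by auto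

lemma doubly_resolving_on_mono:
  "doubly_resolving_on d V Q \<Longrightarrow> Q \<subseteq> Q' \<Longrightarrow> doubly_resolving_on d V Q'"
  unfolding doubly_resolving_on_def doubly_resolves_def by blast

lemma doubly_resolving_on_image:
  assumes bij: "bij_betw f V V" and iso: "\<And>x y. x \<in> V \<Longrightarrow> y \<in> V \<Longrightarrow> d (f x) (f y) = d x y"
    and "Q \<subseteq> V"
  shows "doubly_resolving_on d V (f ` Q) \<longleftrightarrow> doubly_resolving_on d V Q"
proof -
  have resolves_image: "doubly_resolves d (f ` Q) (f x) (f y) \<longleftrightarrow> doubly_resolves d Q x y"
    if "x \<in> V" "y \<in> V" for x y
    using that iso \<open>Q \<subseteq> V\<close> unfolding doubly_resolves_def by (auto simp: subset_iff)
  have inj: "f x \<noteq> f y \<longleftrightarrow> x \<noteq> y" if "x \<in> V" "y \<in> V" for x y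
    using that bij by (auto simp: bij_betw_def inj_on_eq_iff)
  have "f ` V = V"
    using bij by (simp add: bij_betw_def)
  then have "(\<forall>x\<in>V. \<forall>y\<in>V. x \<noteq> y \<longrightarrow> doubly_resolves d (f ` Q) x y) \<longleftrightarrow>
      (\<forall>x\<in>f ` V. \<forall>y\<in>f ` V. x \<noteq> y \<longrightarrow> doubly_resolves d (f ` Q) x y)"
    by simp
  also have "\<dots> \<longleftrightarrow>
      (\<forall>x\<in>V. \<forall>y\<in>V. f x \<noteq> f y \<longrightarrow> doubly_resolves d (f ` Q) (f x) (f y))"
    by simp
  also have "\<dots> \<longleftrightarrow> (\<forall>x\<in>V. \<forall>y\<in>V. x \<noteq> y \<longrightarrow> doubly_resolves d Q x y)"
    using resolves_image inj by simp
  finally show ?thesis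
    unfolding doubly_resolving_on_def .
qed

lemma not_doubly_resolving_onI:
  assumes "x \<in> V" "y \<in> V" "x \<noteq> y"
    and "int (d x q) - int (d y q) = int (d x p) - int (d y p)"
    and "int (d x r) - int (d y r) = int (d x p) - int (d y p)"
  shows "\<not> doubly_resolving_on d V {p, q, r}"
  using assms unfolding doubly_resolving_on_def doubly_resolves_def by auto

lemma doubly_resolving_prism_iff:
  assumes "n \<ge> 3"
  shows "doubly_resolving ({0..<n} \<times> {0..<k}) (cart_adj (cycle_adj n) (path_adj k)) Q \<longleftrightarrow>
    Q \<subseteq> {0..<n} \<times> {0..<k} \<and> finite Q \<and> doubly_resolving_on (prism_dist n) ({0..<n} \<times> {0..<k}) Q"
proof -
  have "doubly_resolves (gdist ({0..<n} \<times> {0..<k}) (cart_adj (cycle_adj n) (path_adj k))) Q x y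
      \<longleftrightarrow> doubly_resolves (prism_dist n) Q x y"
    if "Q \<subseteq> {0..<n} \<times> {0..<k}" "x \<in> {0..<n} \<times> {0..<k}" "y \<in> {0..<n} \<times> {0..<k}" for x y
    using that gdist_prism[OF assms] by (intro doubly_resolves_cong) blast
  then show ?thesis
    unfolding doubly_resolving_iff doubly_resolving_on_def by (metis (no_types, lifting))
qed

lemma cycle_dist_antipodal_sum:
  assumes "i < 2 * m"
  shows "cycle_dist (2 * m) i 0 + cycle_dist (2 * m) i m = m"
proof -
  have "int (cycle_dist (2 * m) i 0) + int (cycle_dist (2 * m) i m) = int m"
    using assms by (simp add: of_nat_cycle_dist)
  then show ?thesis by simp
qed

lemma cycle_dist_0_1_inject:
  assumes "i < n" "i' < n"
    and "cycle_dist n i 0 = cycle_dist n i' 0" "cycle_dist n i 1 = cycle_dist n i' 1"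
  shows "i = i'"
proof (cases "n = 1")
  case False
  with assms(1) have "1 < n" by simp
  from assms(3,4) have "int (cycle_dist n i 0) = int (cycle_dist n i' 0)"
    "int (cycle_dist n i 1) = int (cycle_dist n i' 1)" by simp_all
  with assms(1,2) \<open>1 < n\<close> show ?thesis by (simp add: of_nat_cycle_dist)
qed (use assms in simp)

lemma doubly_resolving_on_prism_landmarks:
  "doubly_resolving_on (prism_dist (2 * m)) ({0..<2 * m} \<times> {0..<k})
     {(0, 0), (0, k - 1), (1, 0), (m, 0)}"
  unfolding doubly_resolving_on_def doubly_resolves_def
proof (intro ballI impI notI)
  fix x y assume "x \<in> {0..<2 * m} \<times> {0..<k}" "y \<in> {0..<2 * m} \<times> {0..<k}" "x \<noteq> y"
  then obtain i a i' a'
    where xy: "x = (i, a)" "y = (i', a')" "i < 2 * m" "a < k" "i' < 2 * m" "a' < k"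
    by (cases x, cases y) auto
  let ?cd = "cycle_dist (2 * m)"
  assume "\<exists>c. \<forall>q\<in>{(0, 0), (0, k - 1), (1, 0), (m, 0)}.
    int (prism_dist (2 * m) x q) - int (prism_dist (2 * m) y q) = c"
  then obtain c where
    layer_0: "int (?cd i 0 + a) - int (?cd i' 0 + a') = c" and
    layer_top: "int (?cd i 0 + (k - 1 - a)) - int (?cd i' 0 + (k - 1 - a')) = c" and
    at_1: "int (?cd i 1 + a) - int (?cd i' 1 + a') = c" and
    at_m: "int (?cd i m + a) - int (?cd i' m + a') = c"
    using xy by (auto simp: prism_dist_def path_dist_eq)
  have "a = a'" using layer_0 layer_top xy by simp
  moreover have "?cd i 0 = ?cd i' 0"
    using layer_0 at_m \<open>a = a'\<close> cycle_dist_antipodal_sum[OF \<open>i < 2 * m\<close>]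
      cycle_dist_antipodal_sum[OF \<open>i' < 2 * m\<close>] by simp
  moreover have "?cd i 1 = ?cd i' 1" using layer_0 at_1 \<open>a = a'\<close> calculation by simp
  ultimately show False
    using cycle_dist_0_1_inject[OF \<open>i < 2 * m\<close> \<open>i' < 2 * m\<close>] \<open>x \<noteq> y\<close> xy by simp
qed

lemma not_doubly_resolves_layer_below:
  assumes "\<forall>q\<in>Q. snd q \<le> a"
  shows "\<not> doubly_resolves (prism_dist n) Q (i, Suc a) (i, a)"
  unfolding doubly_resolves_def not_not
  using assms by (intro exI[of _ 1]) (auto simp: prism_dist_def path_dist_eq)

lemma not_doubly_resolves_layer_above:
  assumes "\<forall>q\<in>Q. a < snd q"
  shows "\<not> doubly_resolves (prism_dist n) Q (i, a) (i, Suc a)"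
  unfolding doubly_resolves_def not_not
  using assms by (intro exI[of _ 1]) (auto simp: prism_dist_def path_dist_eq)

lemma doubly_resolving_on_prism_meets_end_layers:
  assumes "doubly_resolving_on (prism_dist n) ({0..<n} \<times> {0..<k}) Q" "Q \<subseteq> {0..<n} \<times> {0..<k}"
    and "0 < n" "2 \<le> k"
  obtains c c' where "(c, 0) \<in> Q" "(c', k - 1) \<in> Q"
proof -
  have "\<exists>q\<in>Q. snd q = 0"
  proof (rule ccontr)
    assume "\<not> ?thesis"
    then have "\<not> doubly_resolves (prism_dist n) Q (0, 0) (0, 1)"
      using not_doubly_resolves_layer_above[of Q 0] by auto
    with assms show False unfolding doubly_resolving_on_def by auto
  qed
  moreover have "\<exists>q\<in>Q. snd q = k - 1"
  proof (rule ccontr)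
    assume "\<not> ?thesis"
    with assms(2) have "\<forall>q\<in>Q. snd q \<le> k - 2" by fastforce
    then have "\<not> doubly_resolves (prism_dist n) Q (0, Suc (k - 2)) (0, k - 2)"
      by (rule not_doubly_resolves_layer_below)
    with assms show False unfolding doubly_resolving_on_def
      by (simp add: Suc_diff_Suc numeral_2_eq_2)
  qed
  ultimately show ?thesis using that by force
qed

definition cycle_reflect :: "nat \<Rightarrow> nat \<Rightarrow> nat \<Rightarrow> nat" where
  "cycle_reflect n s i = (if i \<le> s then s - i else s + n - i)"

lemma cycle_reflect_involution:
  "s < n \<Longrightarrow> i < n \<Longrightarrow> cycle_reflect n s i < n \<and> cycle_reflect n s (cycle_reflect n s i) = i"
  unfolding cycle_reflect_def by auto

lemma of_nat_cycle_reflect: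
  "s < n \<Longrightarrow> i < n \<Longrightarrow>
    int (cycle_reflect n s i) = (if i \<le> s then int s - int i else int s + int n - int i)"
  unfolding cycle_reflect_def by auto

lemma cycle_dist_reflect:
  assumes "s < n" "i < n" "j < n"
  shows "cycle_dist n (cycle_reflect n s i) (cycle_reflect n s j) = cycle_dist n i j"
proof -
  have "cycle_reflect n s i < n" "cycle_reflect n s j < n"
    using assms cycle_reflect_involution by auto
  with assms
  have "int (cycle_dist n (cycle_reflect n s i) (cycle_reflect n s j)) = int (cycle_dist n i j)"
    unfolding of_nat_cycle_dist[OF \<open>cycle_reflect n s i < n\<close> \<open>cycle_reflect n s j < n\<close>]
      of_nat_cycle_dist[OF \<open>i < n\<close> \<open>j < n\<close>] of_nat_cycle_reflect[OF \<open>s < n\<close> \<open>i < n\<close>]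
      of_nat_cycle_reflect[OF \<open>s < n\<close> \<open>j < n\<close>]
    by (cases "i \<le> s"; cases "j \<le> s"; simp; arith)
  then show ?thesis by simp
qed

lemma doubly_resolving_on_prism_reflect:
  assumes "s < n" "Q \<subseteq> {0..<n} \<times> {0..<k}"
  shows "doubly_resolving_on (prism_dist n) ({0..<n} \<times> {0..<k})
       (map_prod (cycle_reflect n s) id ` Q) \<longleftrightarrow>
     doubly_resolving_on (prism_dist n) ({0..<n} \<times> {0..<k}) Q"
proof (rule doubly_resolving_on_image[OF _ _ assms(2)])
  have "bij_betw (cycle_reflect n s) {0..<n} {0..<n}"
    using cycle_reflect_involution[OF assms(1)]
    by (intro bij_betw_byWitness[where f' = "cycle_reflect n s"]) auto
  then show "bij_betw (map_prod (cycle_reflect n s) id) ({0..<n} \<times> {0..<k}) ({0..<n} \<times> {0..<k})"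
    by (intro bij_betw_map_prod) auto
next
  fix x y assume "x \<in> {0..<n} \<times> {0..<k}" "y \<in> {0..<n} \<times> {0..<k}"
  then show "prism_dist n (map_prod (cycle_reflect n s) id x) (map_prod (cycle_reflect n s) id y) =
      prism_dist n x y"
    using cycle_dist_reflect[OF assms(1)] by (auto simp: prism_dist_def)
qed

lemma not_doubly_resolving_on_prism_same_column:
  assumes "n = 2 * m" "2 \<le> m" "c < n" "0 < k"
  shows "\<not> doubly_resolving_on (prism_dist n) ({0..<n} \<times> {0..<k}) {(0, 0), (0, k - 1), (c, b)}"
proof -
  consider "c = 0 \<or> c = m" | "0 < c" "c < m" | "m < c" by linarith
  then show ?thesis
  proof cases
    case 1
    show ?thesis
      by (rule not_doubly_resolving_onI[where x = "(1, 0)" and y = "(n - 1, 0)"])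
        (use assms 1 in \<open>auto simp: prism_dist_simps\<close>)
  next
    case 2
    show ?thesis
      by (rule not_doubly_resolving_onI[where x = "(0, 0)" and y = "(n - 1, 0)"])
        (use assms 2 in \<open>auto simp: prism_dist_simps\<close>)
  next
    case 3
    show ?thesis
      by (rule not_doubly_resolving_onI[where x = "(0, 0)" and y = "(1, 0)"])
        (use assms 3 in \<open>auto simp: prism_dist_simps\<close>)
  qed
qed

(* The generic witness is the diagonal pair (t,0), (t-1,1): the step from column t-1 to t
   approaches exactly the columns t..t+m-1 and is compensated by the step between layers. *)
lemma not_doubly_resolving_on_prism_on_arc:
  assumes "n = 2 * m" "2 \<le> m" "3 \<le> k" "0 < t" "t \<le> m" "t \<le> c" "c < t + m" "c < n" "b < k"
  shows "\<not> doubly_resolving_on (prism_dist n) ({0..<n} \<times> {0..<k}) {(0, 0), (t, k - 1), (c, b)}"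
proof -
  consider "1 \<le> b" | "b = 0" "c < m" | "b = 0" "c = m" "t < m" | "b = 0" "c = m" "t = m"
    | "b = 0" "m < c"
    using assms(5) by linarith
  then show ?thesis
  proof cases
    case 1
    show ?thesis
      by (rule not_doubly_resolving_onI[where x = "(t, 0)" and y = "(t - 1, 1)"])
        (use assms 1 in \<open>auto simp: prism_dist_simps\<close>)
  next
    case 2
    show ?thesis
      by (rule not_doubly_resolving_onI[where x = "(0, 0)" and y = "(n - 1, 0)"])
        (use assms 2 in \<open>auto simp: prism_dist_simps\<close>)
  next
    case 3
    show ?thesis
      by (rule not_doubly_resolving_onI[where x = "(1, 0)" and y = "(n - 1, 1)"])
        (use assms 3 in \<open>auto simp: prism_dist_simps\<close>)
  next
    case 4
    show ?thesis
      by (rule not_doubly_resolving_onI[where x = "(1, 0)" and y = "(n - 1, 0)"])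
        (use assms 4 in \<open>auto simp: prism_dist_simps\<close>)
  next
    case 5
    show ?thesis
      by (rule not_doubly_resolving_onI[where x = "(c - 1, 0)" and y = "(c, 1)"])
        (use assms 5 in \<open>auto simp: prism_dist_simps\<close>)
  qed
qed

lemma not_doubly_resolving_on_prism_off_arc:
  assumes "n = 2 * m" "2 \<le> m" "3 \<le> k" "0 < t" "t \<le> m" "c < t \<or> t + m \<le> c" "c < n" "b < k"
  shows "\<not> doubly_resolving_on (prism_dist n) ({0..<n} \<times> {0..<k}) {(0, 0), (t, k - 1), (c, b)}"
proof -
  consider "b \<le> k - 2" | "b = k - 1" "c = 0" "t < m" | "b = k - 1" "c = 0" "t = m"
    | "b = k - 1" "0 < c" "c < t" | "b = k - 1" "c = t + m" | "b = k - 1" "t + m < c"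
    using assms by linarith
  then show ?thesis
  proof cases
    case 1
    show ?thesis
      by (rule not_doubly_resolving_onI[where x = "(t, k - 2)" and y = "(t - 1, k - 1)"])
        (use assms 1 in \<open>auto simp: prism_dist_simps\<close>)
  next
    case 2
    show ?thesis
      by (rule not_doubly_resolving_onI[where x = "(0, 0)" and y = "(n - 1, 0)"])
        (use assms 2 in \<open>auto simp: prism_dist_simps\<close>)
  next
    case 3
    show ?thesis
      by (rule not_doubly_resolving_onI[where x = "(1, 0)" and y = "(n - 1, 0)"])
        (use assms 3 in \<open>auto simp: prism_dist_simps\<close>)
  next
    case 4
    show ?thesis
      by (rule not_doubly_resolving_onI[where x = "(c, 0)" and y = "(c - 1, 1)"])
        (use assms 4 in \<open>auto simp: prism_dist_simps\<close>)
  next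
    case 5
    show ?thesis
      by (rule not_doubly_resolving_onI[where x = "(t - 1, k - 1)" and y = "(t + 1, k - 2)"])
        (use assms 5 in \<open>auto simp: prism_dist_simps\<close>)
  next
    case 6
    show ?thesis
      by (rule not_doubly_resolving_onI[where x = "(c, 0)" and y = "(c - 1, 0)"])
        (use assms 6 in \<open>auto simp: prism_dist_simps\<close>)
  qed
qed

lemma not_doubly_resolving_on_prism_normalized:
  assumes "n = 2 * m" "2 \<le> m" "3 \<le> k" "t \<le> m" "c < n" "b < k"
  shows "\<not> doubly_resolving_on (prism_dist n) ({0..<n} \<times> {0..<k}) {(0, 0), (t, k - 1), (c, b)}"
proof -
  consider "t = 0" | "0 < t" "t \<le> c" "c < t + m" | "0 < t" "c < t \<or> t + m \<le> c" by linarith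
  then show ?thesis
  proof cases
    case 1
    then show ?thesis using assms not_doubly_resolving_on_prism_same_column by simp
  next
    case 2
    then show ?thesis using assms not_doubly_resolving_on_prism_on_arc by simp
  next
    case 3
    then show ?thesis using assms not_doubly_resolving_on_prism_off_arc by simp
  qed
qed

lemma not_doubly_resolving_on_prism_three:
  assumes "n = 2 * m" "2 \<le> m" "3 \<le> k" "c\<^sub>1 < n" "c\<^sub>2 < n" "c\<^sub>3 < n" "b < k"
  shows "\<not> doubly_resolving_on (prism_dist n) ({0..<n} \<times> {0..<k})
    {(c\<^sub>1, 0), (c\<^sub>2, k - 1), (c\<^sub>3, b)}"
proof -
  let ?V = "{0..<n} \<times> {0..<k}"
  have reflect: "\<not> doubly_resolving_on (prism_dist n) ?V {(c, 0), (t, k - 1), (c', b)}"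
    if "s < n" "c < n" "t < n" "c' < n"
      and "\<not> doubly_resolving_on (prism_dist n) ?V
             {(cycle_reflect n s c, 0), (cycle_reflect n s t, k - 1), (cycle_reflect n s c', b)}"
    for s c t c'
    using that assms(3,7)
      doubly_resolving_on_prism_reflect[of s n "{(c, 0), (t, k - 1), (c', b)}" k]
    by auto
  define t where "t = cycle_reflect n c\<^sub>1 c\<^sub>2"
  define c where "c = cycle_reflect n c\<^sub>1 c\<^sub>3"
  have "t < n" "c < n" "cycle_reflect n c\<^sub>1 c\<^sub>1 = 0"
    using assms cycle_reflect_involution unfolding t_def c_def by (auto simp: cycle_reflect_def)
  have "\<not> doubly_resolving_on (prism_dist n) ?V {(0, 0), (t, k - 1), (c, b)}"
  proof (cases "t \<le> m")
    case True
    then show ?thesis using not_doubly_resolving_on_prism_normalized assms \<open>c < n\<close> by blast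
  next
    case False
    then have "cycle_reflect n 0 t \<le> m" "cycle_reflect n 0 0 = 0"
      using assms \<open>t < n\<close> by (auto simp: cycle_reflect_def)
    moreover have "cycle_reflect n 0 c < n"
      using cycle_reflect_involution \<open>c < n\<close> assms by auto
    ultimately show ?thesis
      using reflect[of 0 0 t c] not_doubly_resolving_on_prism_normalized assms \<open>t < n\<close> \<open>c < n\<close>
      by auto
  qed
  then show ?thesis
    using reflect[of c\<^sub>1 c\<^sub>1 c\<^sub>2 c\<^sub>3] assms \<open>cycle_reflect n c\<^sub>1 c\<^sub>1 = 0\<close> unfolding t_def c_def
    by auto
qed

lemma card_le_3_obtain_third:
  assumes "finite Q" "card Q \<le> 3" "p \<in> Q" "p' \<in> Q" "p \<noteq> p'"
  obtains q where "q \<in> Q" "Q \<subseteq> {p, p', q}"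
proof (cases "Q - {p, p'} = {}")
  case True
  then show ?thesis using that \<open>p \<in> Q\<close> by blast
next
  case False
  moreover have "card (Q - {p, p'}) \<le> 1"
    using assms by (simp add: card_Diff_subset)
  ultimately have "card (Q - {p, p'}) = 1"
    using \<open>finite Q\<close> by (simp add: le_Suc_eq)
  then obtain q where "Q - {p, p'} = {q}" by (rule card_1_singletonE)
  then show ?thesis using that by blast
qed

lemma doubly_resolving_on_prism_card_ge_4:
  assumes "n = 2 * m" "2 \<le> m" "3 \<le> k" "Q \<subseteq> {0..<n} \<times> {0..<k}" "finite Q"
    and resolving: "doubly_resolving_on (prism_dist n) ({0..<n} \<times> {0..<k}) Q"
  shows "4 \<le> card Q"
proof (rule ccontr)
  assume "\<not> 4 \<le> card Q"
  then have "card Q \<le> 3" by simp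
  obtain c c' where end_layers: "(c, 0) \<in> Q" "(c', k - 1) \<in> Q"
    using doubly_resolving_on_prism_meets_end_layers[OF resolving] assms by auto
  moreover have "(c, 0) \<noteq> (c', k - 1)" using assms(3) by simp
  ultimately obtain q where "q \<in> Q" and covered: "Q \<subseteq> {(c, 0), (c', k - 1), q}"
    using card_le_3_obtain_third[OF \<open>finite Q\<close> \<open>card Q \<le> 3\<close>] by blast
  obtain c'' b where q: "q = (c'', b)" by fastforce
  have "c < n" "c' < n" "c'' < n" "b < k"
    using end_layers \<open>q \<in> Q\<close> q assms(4) by auto
  moreover have
    "doubly_resolving_on (prism_dist n) ({0..<n} \<times> {0..<k}) {(c, 0), (c', k - 1), (c'', b)}"
    using doubly_resolving_on_mono[OF resolving covered] q by simp
  ultimately show False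
    using not_doubly_resolving_on_prism_three assms(1-3) by blast
qed

theorem lemma3p2:
  fixes n k :: nat
  assumes "even n" and "n \<ge> 4" and "k \<ge> 3"
  shows "psi ({0..<n} \<times> {0..<k}) (cart_adj (cycle_adj n) (path_adj k)) = 4"
proof -
  obtain m where m: "n = 2 * m" "2 \<le> m" using assms(1,2) by auto
  let ?Q = "{(0, 0), (0, k - 1), (1, 0), (m, 0)}"
  have "doubly_resolving ({0..<n} \<times> {0..<k}) (cart_adj (cycle_adj n) (path_adj k)) ?Q"
    using doubly_resolving_prism_iff doubly_resolving_on_prism_landmarks m assms(3) by auto
  moreover have "card ?Q = 4" using m assms(3) by auto
  moreover have "4 \<le> card Q"
    if "doubly_resolving ({0..<n} \<times> {0..<k}) (cart_adj (cycle_adj n) (path_adj k)) Q" for Q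
    using that doubly_resolving_prism_iff doubly_resolving_on_prism_card_ge_4 m assms by auto
  ultimately show ?thesis
    unfolding psi_def by (intro Least_equality) blast+
qed

end
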